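(* Let $n$ and $k$ be positive integers with $k\le n$, and let $m$ be a nonnegative integer. Consider an airplane with $n$ seats numbered $1,\dots,n$ and $n$ passengers numbered $1,\dots,n$, passenger $i$ being assigned seat $i$. Passengers board one at a time in the order $1,2,\dots,n$. Passengers $1,\dots,k$ are absent-minded: when it is such a passenger's turn, he chooses a seat uniformly at random among the currently unoccupied seats. Each passenger $i>k$ sits in seat $i$ if it is unoccupied, and otherwise chooses a seat uniformly at random among the currently unoccupied seats. Call a passenger misseated if he does not end up in his assigned seat. Then the probability $P_{n,k}(m)$ that exactly $m$ passengers are misseated is \[ P_{n,k}(m)=\frac{1}{n!}\sum_{s=0}^{k}\binom{k}{s}\sum_{t=0}^{s}(t!)^2\left\{{m-s \atop t}\right\}\left[{n-k+1 \atop m-s+1}\right]\sum_{r=t}^{s}\binom{s}{r}L(r,t)\,d_{s-r}. \]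
   Context: Notation: $\left[{i \atop j}\right]$ is the unsigned Stirling number of the first kind (number of permutations of $i$ elements with exactly $j$ disjoint cycles); $\left\{{i \atop j}\right\}$ is the Stirling number of the second kind (number of partitions of a set of $i$ labeled objects into $j$ nonempty unlabeled blocks); $L(i,j)$ is the Lah number (number of ways to partition a set of $i$ elements into $j$ nonempty linearly ordered subsets, with $L(0,0)=1$); $d_i$ is the number of derangements (fixed-point-free permutations) of an $i$-element set, with $d_0=1$. Conventions for positive integers $p,q$: $\left\{{-p \atop q}\right\}=0$, $\left\{{-p \atop 0}\right\}=0$, $\left\{{0 \atop q}\right\}=0$, $\left\{{0 \atop 0}\right\}=1$, $\left[{p \atop 0}\right]=0$, $\left[{p \atop -q}\right]=0$. *)

theory Defs
  imports "HOL-Probability.Probability" "HOL-Combinatorics.Stirling" "HOL-Combinatorics.Permutations"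
begin

definition stirling2_int :: "int \<Rightarrow> int \<Rightarrow> nat" where
  "stirling2_int a b = (if a < 0 \<or> b < 0 then 0 else Stirling (nat a) (nat b))"

definition stirling1_int :: "int \<Rightarrow> int \<Rightarrow> nat" where
  "stirling1_int a b = (if a < 0 \<or> b < 0 then 0 else stirling (nat a) (nat b))"

text \<open>Lah number: partitions of {0..<i} into j nonempty linearly ordered blocks
  (each block a nonempty list without repetitions).\<close>
definition lah :: "nat \<Rightarrow> nat \<Rightarrow> nat" where
  "lah i j = card {P :: nat list set.
      (\<forall>xs\<in>P. xs \<noteq> [] \<and> distinct xs) \<and>
      (\<forall>xs\<in>P. \<forall>ys\<in>P. xs \<noteq> ys \<longrightarrow> set xs \<inter> set ys = {}) \<and>
      \<Union>(set ` P) = {0..<i} \<and> card P = j}"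

definition derangements_num :: "nat \<Rightarrow> nat" where
  "derangements_num i = card {p. p permutes {0..<i} \<and> (\<forall>x\<in>{0..<i}. p x \<noteq> x)}"

text \<open>The boarding process: after i passengers have boarded, the state is the list of
  seats taken by passengers 1..i (passenger j sits in seat xs ! (j-1)).\<close>
primrec seating :: "nat \<Rightarrow> nat \<Rightarrow> nat \<Rightarrow> nat list pmf" where
  "seating n k 0 = return_pmf []"
| "seating n k (Suc i) = do {
      xs \<leftarrow> seating n k i;
      s \<leftarrow> (if Suc i \<le> k \<or> Suc i \<in> set xs
             then pmf_of_set ({1..n} - set xs)
             else return_pmf (Suc i));
      return_pmf (xs @ [s])
    }"

definition misseated :: "nat \<Rightarrow> nat list \<Rightarrow> nat" where
  "misseated n xs = card {i \<in> {1..n}. xs ! (i - 1) \<noteq> i}"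

end

theory Submission
  imports Defs "HOL-Combinatorics.Multiset_Permutations"
begin

text \<open>
  A complete boarding is a permutation \<open>\<tau>\<close> of the seats, \<open>\<tau> j\<close> being the seat of passenger \<open>j\<close>.
  If \<open>A \<subseteq> {1..k}\<close> and \<open>D \<subseteq> {k+1..n}\<close> are the misseated absent-minded and regular passengers,
  then \<open>\<tau>\<close> is a derangement of \<open>A \<union> D\<close> in which every seat \<open>d \<in> D\<close> is taken by an earlier
  passenger, and conversely. Its probability depends on \<open>D\<close> only: passenger \<open>j\<close> chooses among
  \<open>n + 1 - j\<close> free seats exactly when \<open>j \<le> k\<close> or \<open>j \<in> D\<close>, so it equals
  \<open>\<Prod>j \<in> {k+1..n} - D. (n + 1 - j)\<close> divided by \<open>n!\<close>, and summing over all \<open>D\<close> of a given size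
  gives a Stirling number of the first kind.

  Deleting the largest element of \<open>D\<close> from its cycle shows that the number of these
  derangements with \<open>|A| = s\<close>, \<open>|D| = q\<close> is \<open>\<Sum>j. (-1)^j C(s,j) (s-j)! (s-j)^q\<close>. Expanding
  \<open>(s-j)^q\<close> into falling factorials with Stirling numbers of the second kind, and using
  \<open>t! L(r,t) = r! C(r-1,t-1)\<close> and \<open>d_u = \<Sum>i. (-1)^i C(u,i) (u-i)!\<close>, turns this count into
  the inner double sum of the formula.
\<close>

section \<open>Admissible derangements\<close>

text \<open>\<open>\<tau> z\<close> is the seat of passenger \<open>z\<close>; a misseated regular passenger \<open>d \<in> D\<close> must have
  found his seat taken by an earlier passenger.\<close>
definition admissible_derangements :: "nat set \<Rightarrow> nat set \<Rightarrow> (nat \<Rightarrow> nat) set" where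
  "admissible_derangements A D = {\<tau>. \<tau> permutes A \<union> D \<and> (\<forall>z\<in>A \<union> D. \<tau> z \<noteq> z) \<and>
     (\<forall>z\<in>A \<union> D. \<tau> z \<in> D \<longrightarrow> z < \<tau> z)}"

lemma finite_admissible_derangements:
  "finite A \<Longrightarrow> finite D \<Longrightarrow> finite (admissible_derangements A D)"
  unfolding admissible_derangements_def
  by (rule finite_subset[OF _ finite_permutations[of "A \<union> D"]]) auto

lemma admissible_derangements_empty: "admissible_derangements {} {} = {id}"
  unfolding admissible_derangements_def by (auto simp: permutes_empty)

lemma admissible_derangements_insert_max_image:
  assumes \<tau>: "\<tau> \<in> admissible_derangements A (insert d D)" and less: "\<forall>z\<in>A \<union> D. z < d"
  shows "\<tau> d \<in> A"
proof -
  have "\<tau> d \<in> A \<union> insert d D" "\<tau> d \<noteq> d" "\<tau> d \<in> insert d D \<longrightarrow> d < \<tau> d"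
    using \<tau> permutes_in_image[of \<tau> "A \<union> insert d D" d] unfolding admissible_derangements_def by auto
  then show ?thesis using less by (auto dest: less_asym)
qed

text \<open>Deleting the largest element \<open>d\<close> from its cycle in \<open>\<sigma>\<close> leaves an admissible derangement \<open>\<tau>\<close>
  of \<open>A \<union> D\<close> together with the predecessor \<open>x\<close> of \<open>d\<close>, where \<open>\<tau> x = \<sigma> d \<in> A\<close>, unless that
  cycle is a transposition \<open>(y d)\<close>, whose removal leaves one of \<open>(A - {y}) \<union> D\<close>.\<close>
lemma bij_betw_admissible_long_cycle:
  assumes disj: "A \<inter> D = {}" and less: "\<forall>z\<in>A \<union> D. z < d"
  shows "bij_betw (\<lambda>(\<tau>, x). \<tau> \<circ> Transposition.transpose x d)
           (SIGMA \<tau>:admissible_derangements A D. {x \<in> A \<union> D. \<tau> x \<in> A})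
           {\<sigma> \<in> admissible_derangements A (insert d D). \<sigma> (\<sigma> d) \<noteq> d}"
proof -
  let ?f = "\<lambda>(\<tau>, x). \<tau> \<circ> Transposition.transpose x d"
  let ?g = "\<lambda>\<sigma>. (\<sigma> \<circ> Transposition.transpose (inv \<sigma> d) d, inv \<sigma> d)"
  let ?S = "SIGMA \<tau>:admissible_derangements A D. {x \<in> A \<union> D. \<tau> x \<in> A}"
  let ?P = "{\<sigma> \<in> admissible_derangements A (insert d D). \<sigma> (\<sigma> d) \<noteq> d}"
  have dn: "d \<notin> A \<union> D" using less by auto
  have f_into: "?f (\<tau>, x) \<in> admissible_derangements A (insert d D) \<and> ?f (\<tau>, x) (?f (\<tau>, x) d) \<noteq> d"
    and left: "?g (?f (\<tau>, x)) = (\<tau>, x)"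
    if \<tau>: "\<tau> \<in> admissible_derangements A D" and x: "x \<in> A \<union> D" "\<tau> x \<in> A" for \<tau> x
  proof -
    have p: "\<tau> permutes A \<union> D" and der: "\<forall>z\<in>A \<union> D. \<tau> z \<noteq> z" and ord: "\<forall>z\<in>A \<union> D. \<tau> z \<in> D \<longrightarrow> z < \<tau> z"
      using \<tau> unfolding admissible_derangements_def by auto
    have \<tau>d: "\<tau> d = d" using p dn by (simp add: permutes_not_in)
    have in_AD: "z \<in> A \<union> D \<Longrightarrow> \<tau> z \<in> A \<union> D" for z using permutes_in_image[OF p] by blast
    have perm: "\<tau> \<circ> Transposition.transpose x d permutes A \<union> insert d D"
      by (rule permutes_compose[OF permutes_swap_id permutes_subset[OF p]]) (use x in auto)
    moreover have "\<tau> (\<tau> x) \<noteq> d" using in_AD[OF in_AD[OF x(1)]] dn by auto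
    ultimately show "?f (\<tau>, x) \<in> admissible_derangements A (insert d D) \<and> ?f (\<tau>, x) (?f (\<tau>, x) d) \<noteq> d"
      using x \<tau>d der ord in_AD dn disj less
      unfolding admissible_derangements_def by (auto simp: Transposition.transpose_def)
    have "inv (\<tau> \<circ> Transposition.transpose x d) d = x"
      using perm \<tau>d by (simp add: permutes_inv_eq)
    then show "?g (?f (\<tau>, x)) = (\<tau>, x)" by (simp add: comp_assoc)
  qed
  have g_into: "?g \<sigma> \<in> ?S"
    if \<sigma>: "\<sigma> \<in> admissible_derangements A (insert d D)" and long: "\<sigma> (\<sigma> d) \<noteq> d" for \<sigma>
  proof -
    have p: "\<sigma> permutes A \<union> insert d D" and der: "\<forall>z\<in>A \<union> insert d D. \<sigma> z \<noteq> z"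
      and ord: "\<forall>z\<in>A \<union> insert d D. \<sigma> z \<in> insert d D \<longrightarrow> z < \<sigma> z"
      using \<sigma> unfolding admissible_derangements_def by auto
    define x where "x = inv \<sigma> d"
    have \<sigma>x: "\<sigma> x = d" unfolding x_def using p by (meson permutes_inverses(1))
    have x: "x \<in> A \<union> D"
      using p \<sigma>x der by (metis Un_iff insert_iff insertI1 permutes_not_in permutes_in_image)
    have \<sigma>d: "\<sigma> d \<in> A" by (rule admissible_derangements_insert_max_image[OF \<sigma> less])
    have "\<sigma> \<circ> Transposition.transpose x d permutes A \<union> insert d D"
      by (rule permutes_compose[OF permutes_swap_id p]) (use x in auto)
    then have "\<sigma> \<circ> Transposition.transpose x d permutes A \<union> D"
      by (rule permutes_superset) (use \<sigma>x x dn in \<open>auto simp: Transposition.transpose_def\<close>)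
    then show ?thesis
      using x \<sigma>x \<sigma>d der ord long dn disj unfolding admissible_derangements_def x_def[symmetric]
      by (auto simp: Transposition.transpose_def)
  qed
  show ?thesis
  proof (rule bij_betw_byWitness[where f' = ?g])
    show "?f ` ?S \<subseteq> ?P" using f_into by auto
    show "?g ` ?P \<subseteq> ?S" by (rule image_subsetI, rule g_into) auto
  qed (use left in \<open>auto simp: comp_assoc\<close>)
qed

lemma bij_betw_admissible_two_cycle:
  assumes disj: "A \<inter> D = {}" and less: "\<forall>z\<in>A \<union> D. z < d"
  shows "bij_betw (\<lambda>(y, \<tau>). Transposition.transpose y d \<circ> \<tau>)
           (SIGMA y:A. admissible_derangements (A - {y}) D)
           {\<sigma> \<in> admissible_derangements A (insert d D). \<sigma> (\<sigma> d) = d}"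
proof -
  let ?f = "\<lambda>(y, \<tau>). Transposition.transpose y d \<circ> \<tau>"
  let ?g = "\<lambda>\<sigma>. (\<sigma> d, Transposition.transpose (\<sigma> d) d \<circ> \<sigma>)"
  let ?S = "SIGMA y:A. admissible_derangements (A - {y}) D"
  let ?P = "{\<sigma> \<in> admissible_derangements A (insert d D). \<sigma> (\<sigma> d) = d}"
  have dn: "d \<notin> A \<union> D" using less by auto
  have f_into: "?f (y, \<tau>) \<in> admissible_derangements A (insert d D) \<and> ?f (y, \<tau>) (?f (y, \<tau>) d) = d"
    and left: "?g (?f (y, \<tau>)) = (y, \<tau>)"
    if y: "y \<in> A" and \<tau>: "\<tau> \<in> admissible_derangements (A - {y}) D" for y \<tau>
  proof -
    have p: "\<tau> permutes (A - {y}) \<union> D" and der: "\<forall>z\<in>(A - {y}) \<union> D. \<tau> z \<noteq> z"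
      and ord: "\<forall>z\<in>(A - {y}) \<union> D. \<tau> z \<in> D \<longrightarrow> z < \<tau> z"
      using \<tau> unfolding admissible_derangements_def by auto
    have \<tau>y: "\<tau> y = y" and \<tau>d: "\<tau> d = d" using y disj dn by (auto intro: permutes_not_in[OF p])
    have in_AD: "z \<in> (A - {y}) \<union> D \<Longrightarrow> \<tau> z \<in> (A - {y}) \<union> D" for z
      using permutes_in_image[OF p] by blast
    have "Transposition.transpose y d \<circ> \<tau> permutes A \<union> insert d D"
      by (rule permutes_compose[OF permutes_subset[OF p] permutes_swap_id]) (use y in auto)
    then show "?f (y, \<tau>) \<in> admissible_derangements A (insert d D) \<and> ?f (y, \<tau>) (?f (y, \<tau>) d) = d"
      using y der ord in_AD \<tau>y \<tau>d dn disj less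
      unfolding admissible_derangements_def by (auto simp: Transposition.transpose_def)
    show "?g (?f (y, \<tau>)) = (y, \<tau>)" using \<tau>d by (simp add: comp_assoc[symmetric])
  qed
  have g_into: "?g \<sigma> \<in> ?S"
    if \<sigma>: "\<sigma> \<in> admissible_derangements A (insert d D)" and short: "\<sigma> (\<sigma> d) = d" for \<sigma>
  proof -
    have p: "\<sigma> permutes A \<union> insert d D" and der: "\<forall>z\<in>A \<union> insert d D. \<sigma> z \<noteq> z"
      and ord: "\<forall>z\<in>A \<union> insert d D. \<sigma> z \<in> insert d D \<longrightarrow> z < \<sigma> z"
      using \<sigma> unfolding admissible_derangements_def by auto
    define y where "y = \<sigma> d"
    have y: "y \<in> A" unfolding y_def by (rule admissible_derangements_insert_max_image[OF \<sigma> less])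
    have inj: "\<sigma> z = \<sigma> z' \<longleftrightarrow> z = z'" for z z' using permutes_inj[OF p] by (auto dest: injD)
    have "Transposition.transpose y d \<circ> \<sigma> permutes A \<union> insert d D"
      by (rule permutes_compose[OF p permutes_swap_id]) (use y in auto)
    then have "Transposition.transpose y d \<circ> \<sigma> permutes (A - {y}) \<union> D"
      by (rule permutes_superset) (use short y_def in \<open>auto simp: Transposition.transpose_def\<close>)
    then show ?thesis
      using y der ord short inj[of _ d] inj[of _ y] dn disj unfolding admissible_derangements_def y_def[symmetric]
      by (auto simp: Transposition.transpose_def)
  qed
  show ?thesis
  proof (rule bij_betw_byWitness[where f' = ?g])
    show "?f ` ?S \<subseteq> ?P" using f_into by auto
    show "?g ` ?P \<subseteq> ?S" by (rule image_subsetI, rule g_into) auto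
  qed (use left in \<open>auto simp: comp_assoc[symmetric]\<close>)
qed

lemma card_admissible_derangements_insert:
  assumes fin: "finite A" "finite D" and disj: "A \<inter> D = {}" and less: "\<forall>z\<in>A \<union> D. z < d"
  shows "card (admissible_derangements A (insert d D)) =
    card A * card (admissible_derangements A D) + (\<Sum>y\<in>A. card (admissible_derangements (A - {y}) D))"
proof -
  let ?C = "admissible_derangements A (insert d D)"
  have preimage: "card {x \<in> A \<union> D. \<tau> x \<in> A} = card A" if "\<tau> \<in> admissible_derangements A D" for \<tau>
  proof -
    have p: "\<tau> permutes A \<union> D" using that unfolding admissible_derangements_def by auto
    then have "{x \<in> A \<union> D. \<tau> x \<in> A} = \<tau> -` A" using permutes_not_in[OF p] by fastforce
    then show ?thesis using permutes_inj[OF p] permutes_surj[OF p] by (simp add: card_vimage_inj)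
  qed
  have "card ?C = card ({\<sigma> \<in> ?C. \<sigma> (\<sigma> d) \<noteq> d} \<union> {\<sigma> \<in> ?C. \<sigma> (\<sigma> d) = d})"
    by (rule arg_cong[where f = card]) auto
  also have "\<dots> = card {\<sigma> \<in> ?C. \<sigma> (\<sigma> d) \<noteq> d} + card {\<sigma> \<in> ?C. \<sigma> (\<sigma> d) = d}"
    by (rule card_Un_disjoint) (use finite_admissible_derangements[of A "insert d D"] fin in auto)
  also have "card {\<sigma> \<in> ?C. \<sigma> (\<sigma> d) \<noteq> d} = card A * card (admissible_derangements A D)"
    using bij_betw_same_card[OF bij_betw_admissible_long_cycle[OF disj less]] preimage fin
    by (simp add: finite_admissible_derangements mult.commute)
  also have "card {\<sigma> \<in> ?C. \<sigma> (\<sigma> d) = d} = (\<Sum>y\<in>A. card (admissible_derangements (A - {y}) D))"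
    using bij_betw_same_card[OF bij_betw_admissible_two_cycle[OF disj less]] fin
    by (simp add: finite_admissible_derangements)
  finally show ?thesis .
qed

definition admissible_count :: "nat \<Rightarrow> nat \<Rightarrow> int" where
  "admissible_count s q = (\<Sum>j\<le>s. (-1)^j * int (s choose j) * fact (s - j) * int (s - j) ^ q)"

lemma admissible_count_Suc_right:
  "admissible_count s (Suc q) = int s * (admissible_count s q + admissible_count (s - 1) q)"
proof (cases s)
  case 0
  then show ?thesis by (simp add: admissible_count_def)
next
  case (Suc s')
  let ?w = "\<lambda>j. (-1)^j * int (s choose j) * fact (s - j) * int (s - j) ^ q"
  have "int s * admissible_count s' q =
      (\<Sum>j\<le>s'. (-1)^j * int (s * (s' choose j)) * fact (s' - j) * int (s' - j) ^ q)"
    unfolding admissible_count_def by (simp add: sum_distrib_left algebra_simps)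
  also have "\<dots> = (\<Sum>j\<le>s'. (-1)^j * int (Suc j * (s choose Suc j)) * fact (s - Suc j) * int (s - Suc j) ^ q)"
  proof (rule sum.cong[OF refl])
    fix j
    have "s * (s' choose j) = Suc j * (s choose Suc j)"
      unfolding Suc by (metis Suc_times_binomial_eq mult.commute)
    then show "(-1)^j * int (s * (s' choose j)) * fact (s' - j) * int (s' - j) ^ q =
        (-1)^j * int (Suc j * (s choose Suc j)) * fact (s - Suc j) * int (s - Suc j) ^ q"
      using Suc by simp
  qed
  also have "\<dots> = - (\<Sum>j\<le>s. int j * ?w j)"
    unfolding Suc by (subst sum.atMost_Suc_shift) (simp add: sum_negf[symmetric] algebra_simps)
  finally have shifted: "int s * admissible_count (s - 1) q = - (\<Sum>j\<le>s. int j * ?w j)"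
    using Suc by simp
  have "admissible_count s (Suc q) = (\<Sum>j\<le>s. int s * ?w j - int j * ?w j)"
    unfolding admissible_count_def
    by (rule sum.cong[OF refl]) (auto simp: algebra_simps of_nat_diff)
  also have "\<dots> = int s * admissible_count s q - (\<Sum>j\<le>s. int j * ?w j)"
    unfolding sum_subtractf admissible_count_def sum_distrib_left by (simp only: mult.assoc)
  also have "\<dots> = int s * admissible_count s q + int s * admissible_count (s - 1) q"
    using shifted by simp
  finally show ?thesis by (simp add: algebra_simps)
qed

lemma admissible_count_Suc_0:
  "admissible_count (Suc s) 0 = int (Suc s) * admissible_count s 0 + (-1) ^ Suc s"
proof -
  have "admissible_count (Suc s) 0 = (\<Sum>j\<le>s. (-1)^j * int ((Suc s choose j) * fact (Suc s - j))) + (-1) ^ Suc s"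
    unfolding admissible_count_def by (simp add: algebra_simps)
  also have "(\<Sum>j\<le>s. (-1)^j * int ((Suc s choose j) * fact (Suc s - j))) =
      (\<Sum>j\<le>s. (-1)^j * int (Suc s * ((s choose j) * fact (s - j))))"
  proof (rule sum.cong[OF refl])
    fix j assume "j \<in> {..s}"
    then have "fact j * ((Suc s choose j) * fact (Suc s - j)) = fact j * (Suc s * ((s choose j) * fact (s - j)))"
      using binomial_fact_lemma[of j s] binomial_fact_lemma[of j "Suc s"] by (simp add: algebra_simps)
    then show "(-1)^j * int ((Suc s choose j) * fact (Suc s - j)) = (-1)^j * int (Suc s * ((s choose j) * fact (s - j)))"
      by simp
  qed
  also have "\<dots> = int (Suc s) * admissible_count s 0"
    unfolding admissible_count_def by (simp add: sum_distrib_left algebra_simps)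
  finally show ?thesis .
qed

lemma admissible_count_Suc_0_rec:
  "admissible_count (Suc s) 0 = int s * (admissible_count s 0 + admissible_count (s - 1) 0)"
proof (cases s)
  case 0
  then show ?thesis by (simp add: admissible_count_def)
next
  case (Suc s')
  have "admissible_count (Suc s) 0 = int s * admissible_count s 0 + (admissible_count s 0 - (-1)^s)"
    by (simp add: admissible_count_Suc_0 algebra_simps)
  also have "admissible_count s 0 - (-1)^s = int s * admissible_count s' 0"
    using admissible_count_Suc_0[of s'] Suc by simp
  finally show ?thesis using Suc by (simp add: algebra_simps)
qed

text \<open>Without misseated regular passengers, the last misseated absent-minded passenger \<open>a\<close> may
  be declared regular: the seat \<open>a\<close> is always taken by an earlier passenger.\<close>
lemma admissible_derangements_move_max:
  assumes "a \<in> A" "\<forall>z\<in>A - {a}. z < a"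
  shows "admissible_derangements A {} = admissible_derangements (A - {a}) {a}"
  using assms unfolding admissible_derangements_def by (auto simp: insert_absorb)

lemma card_admissible_derangements:
  assumes "finite A" "finite D" "A \<inter> D = {}" "\<forall>a\<in>A. \<forall>x\<in>D. a < x"
  shows "int (card (admissible_derangements A D)) = admissible_count (card A) (card D)"
  using assms
proof (induction "card A + card D" arbitrary: A D rule: less_induct)
  case less
  have step: "int (card (admissible_derangements X (insert e Y))) =
      int (card X) * (admissible_count (card X) (card Y) + admissible_count (card X - 1) (card Y))"
    if X: "card X + card Y < card A + card D" "finite X" "finite Y" "X \<inter> Y = {}" "\<forall>a\<in>X. \<forall>x\<in>Y. a < x"
      and e: "\<forall>z\<in>X \<union> Y. z < e" for X Y e
  proof -
    have "int (card (admissible_derangements (X - {y}) Y)) = admissible_count (card X - 1) (card Y)"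
      if "y \<in> X" for y
    proof -
      have "card (X - {y}) + card Y < card A + card D" using X that by (simp add: card_Diff_singleton)
      moreover have "(X - {y}) \<inter> Y = {}" using X by auto
      ultimately show ?thesis using less.hyps[of "X - {y}" Y] X that by (simp add: card_Diff_singleton)
    qed
    then show ?thesis
      using card_admissible_derangements_insert[of X Y e] less.hyps[of X Y] X e
      by (simp add: algebra_simps)
  qed
  consider "D \<noteq> {}" | "D = {}" "A \<noteq> {}" | "A = {}" "D = {}" by blast
  then show ?case
  proof cases
    case 1
    define d where "d = Max D"
    have d: "d \<in> D" "\<forall>z\<in>A \<union> (D - {d}). z < d"
      using 1 less.prems unfolding d_def by (auto intro: Max_in le_neq_trans[OF Max_ge])
    moreover have "card (D - {d}) < card D" using d less.prems by (meson card_Diff1_less)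
    ultimately have "int (card (admissible_derangements A (insert d (D - {d})))) =
        admissible_count (card A) (Suc (card (D - {d})))"
      unfolding admissible_count_Suc_right by (intro step) (use less.prems in auto)
    moreover have "Suc (card (D - {d})) = card D" using d less.prems by (metis card_Suc_Diff1)
    ultimately show ?thesis using d by (simp only: insert_Diff)
  next
    case 2
    define a where "a = Max A"
    have a: "a \<in> A" "\<forall>z\<in>A - {a}. z < a"
      using 2 less.prems unfolding a_def by (auto intro: Max_in le_neq_trans[OF Max_ge])
    moreover have "card (A - {a}) < card A" using a less.prems by (meson card_Diff1_less)
    ultimately have "int (card (admissible_derangements (A - {a}) (insert a {}))) =
        admissible_count (Suc (card (A - {a}))) 0"
      unfolding admissible_count_Suc_0_rec by (intro step[of _ "{}", unfolded card.empty]) (use less.prems in auto)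
    moreover have "Suc (card (A - {a})) = card A" using a less.prems by (metis card_Suc_Diff1)
    ultimately show ?thesis using a 2 admissible_derangements_move_max[of a A] by simp
  next
    case 3
    then show ?thesis by (simp add: admissible_derangements_empty admissible_count_def)
  qed
qed

lemma derangements_num_eq_admissible_count: "int (derangements_num s) = admissible_count s 0"
proof -
  have "{p. p permutes {0..<s} \<and> (\<forall>x\<in>{0..<s}. p x \<noteq> x)} = admissible_derangements {0..<s} {}"
    unfolding admissible_derangements_def by auto
  then show ?thesis
    unfolding derangements_num_def using card_admissible_derangements[of "{0..<s}" "{}"] by simp
qed

section \<open>Lah numbers\<close>

definition lah_partitions :: "'a set \<Rightarrow> nat \<Rightarrow> 'a list set set" where
  "lah_partitions S j = {P.
      (\<forall>xs\<in>P. xs \<noteq> [] \<and> distinct xs) \<and>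
      (\<forall>xs\<in>P. \<forall>ys\<in>P. xs \<noteq> ys \<longrightarrow> set xs \<inter> set ys = {}) \<and>
      \<Union>(set ` P) = S \<and> card P = j}"

definition ordered_lah_partitions :: "'a set \<Rightarrow> nat \<Rightarrow> 'a list list set" where
  "ordered_lah_partitions S j = {ls. distinct ls \<and> set ls \<in> lah_partitions S j}"

lemma lah_eq_card_lah_partitions: "lah i j = card (lah_partitions {0..<i} j)"
  unfolding lah_def lah_partitions_def ..

lemma lah_partitions_subset: "lah_partitions S j \<subseteq> Pow {xs. set xs \<subseteq> S \<and> distinct xs}"
  unfolding lah_partitions_def by auto

lemma finite_lah_partitions: "finite S \<Longrightarrow> finite (lah_partitions S j)"
  using lah_partitions_subset finite_subset_distinct by (metis finite_Pow_iff finite_subset)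

lemma finite_ordered_lah_partitions: "finite S \<Longrightarrow> finite (ordered_lah_partitions S j)"
proof -
  assume S: "finite S"
  have "ordered_lah_partitions S j \<subseteq> {ls. set ls \<subseteq> {xs. set xs \<subseteq> S \<and> distinct xs} \<and> length ls = j}"
    using lah_partitions_subset unfolding ordered_lah_partitions_def lah_partitions_def
    by (auto simp: distinct_card)
  then show ?thesis
    using finite_lists_length_eq[OF finite_subset_distinct[OF S]] by (rule finite_subset)
qed

lemma card_ordered_lah_partitions:
  assumes S: "finite S"
  shows "card (ordered_lah_partitions S j) = fact j * card (lah_partitions S j)"
proof -
  have "set ` ordered_lah_partitions S j \<subseteq> lah_partitions S j"
    unfolding ordered_lah_partitions_def by auto
  then have "card (ordered_lah_partitions S j) =
      (\<Sum>P\<in>lah_partitions S j. card {ls \<in> ordered_lah_partitions S j. set ls = P})"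
    using sum.group[OF finite_ordered_lah_partitions[OF S, of j] finite_lah_partitions[OF S, of j], of set "\<lambda>_. 1::nat"]
    by simp
  also have "\<dots> = (\<Sum>P\<in>lah_partitions S j. fact j)"
  proof (rule sum.cong[OF refl])
    fix P assume P: "P \<in> lah_partitions S j"
    then have "{ls \<in> ordered_lah_partitions S j. set ls = P} = permutations_of_set P"
      unfolding ordered_lah_partitions_def permutations_of_set_def by auto
    moreover have "P \<subseteq> {xs. set xs \<subseteq> S \<and> distinct xs}" using P lah_partitions_subset by blast
    then have "finite P" using finite_subset_distinct[OF S] by (rule finite_subset)
    moreover have "card P = j" using P unfolding lah_partitions_def by auto
    ultimately show "card {ls \<in> ordered_lah_partitions S j. set ls = P} = fact j" by simp
  qed
  finally show ?thesis by simp
qed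

lemma card_ordered_lah_partitions_Suc:
  assumes S: "finite S"
  shows "card (ordered_lah_partitions S (Suc j)) =
    (\<Sum>xs \<in> {xs. xs \<noteq> [] \<and> distinct xs \<and> set xs \<subseteq> S}. card (ordered_lah_partitions (S - set xs) j))"
proof -
  let ?X = "{xs. xs \<noteq> [] \<and> distinct xs \<and> set xs \<subseteq> S}"
  let ?S = "SIGMA xs:?X. ordered_lah_partitions (S - set xs) j"
  have f_into: "xs # ls \<in> ordered_lah_partitions S (Suc j)"
    if xs: "xs \<in> ?X" and ls: "ls \<in> ordered_lah_partitions (S - set xs) j" for xs ls
  proof -
    have "xs \<notin> set ls"
    proof
      assume "xs \<in> set ls"
      then have "set xs \<subseteq> S - set xs"
        using ls unfolding ordered_lah_partitions_def lah_partitions_def by blast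
      then show False using xs by (cases xs) auto
    qed
    with xs ls show ?thesis
      unfolding ordered_lah_partitions_def lah_partitions_def by (auto simp: distinct_card)
  qed
  have g_into: "(hd ls, tl ls) \<in> ?S \<and> hd ls # tl ls = ls" if "ls \<in> ordered_lah_partitions S (Suc j)" for ls
    using that unfolding ordered_lah_partitions_def lah_partitions_def
    by (cases ls) (auto simp: distinct_card)
  have "bij_betw (\<lambda>(xs, ls). xs # ls) ?S (ordered_lah_partitions S (Suc j))"
    by (rule bij_betw_byWitness[where f' = "\<lambda>ls. (hd ls, tl ls)"]) (use f_into g_into in auto)
  then have "card (ordered_lah_partitions S (Suc j)) = card ?S"
    by (simp add: bij_betw_same_card)
  also have "\<dots> = (\<Sum>xs\<in>?X. card (ordered_lah_partitions (S - set xs) j))"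
  proof (rule card_SigmaI)
    show "finite ?X" by (rule finite_subset[OF _ finite_subset_distinct[OF S]]) auto
  qed (use S finite_ordered_lah_partitions in blast)
  finally show ?thesis .
qed

definition ordered_lah :: "nat \<Rightarrow> nat \<Rightarrow> nat" where
  "ordered_lah r t = (if t = 0 then of_bool (r = 0) else if r = 0 then 0 else fact r * ((r - 1) choose (t - 1)))"

lemma sum_ordered_lah_first_block:
  "(\<Sum>l\<in>{1..r}. \<Prod>{r - l + 1..r} * ordered_lah (r - l) t) = ordered_lah r (Suc t)"
proof (cases "t = 0")
  case True
  have "(\<Sum>l\<in>{1..r}. \<Prod>{r - l + 1..r} * ordered_lah (r - l) t) = (\<Sum>l\<in>{1..r}. if l = r then \<Prod>{1..r} else 0)"
    by (rule sum.cong[OF refl]) (auto simp: ordered_lah_def True)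
  then show ?thesis using True by (simp add: ordered_lah_def fact_prod)
next
  case False
  have "\<Prod>{r - l + 1..r} * ordered_lah (r - l) t = (if l < r then fact r * ((r - 1 - l) choose (t - 1)) else 0)"
    if "l \<in> {1..r}" for l
    using that fact_eq_fact_times[of "r - l" r] False by (auto simp: ordered_lah_def)
  then have "(\<Sum>l\<in>{1..r}. \<Prod>{r - l + 1..r} * ordered_lah (r - l) t) =
      (\<Sum>l\<in>{1..r}. if l < r then fact r * ((r - 1 - l) choose (t - 1)) else 0)"
    by (rule sum.cong[OF refl])
  also have "\<dots> = fact r * (\<Sum>l\<in>{1..<r}. (r - 1 - l) choose (t - 1))"
    unfolding sum_distrib_left by (rule sum.mono_neutral_cong_right) auto
  also have "(\<Sum>l\<in>{1..<r}. (r - 1 - l) choose (t - 1)) = (\<Sum>i<r - 1. i choose (t - 1))"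
    by (rule sum.reindex_bij_witness[where i = "\<lambda>i. r - 1 - i" and j = "\<lambda>l. r - 1 - l"]) auto
  also have "\<dots> = (r - 1) choose t"
    using False by (cases "r - 1") (simp_all add: lessThan_Suc_atMost sum_choose_upper)
  finally show ?thesis using False by (simp add: ordered_lah_def)
qed

lemma card_ordered_lah_partitions_eq:
  "finite S \<Longrightarrow> card (ordered_lah_partitions S t) = ordered_lah (card S) t"
proof (induction t arbitrary: S)
  case 0
  have "ordered_lah_partitions S 0 = (if S = {} then {[]} else {})"
    unfolding ordered_lah_partitions_def lah_partitions_def using 0 by auto
  then show ?case using 0 by (simp add: ordered_lah_def)
next
  case (Suc t)
  let ?X = "{xs. xs \<noteq> [] \<and> distinct xs \<and> set xs \<subseteq> S}"
  have fin: "finite ?X" by (rule finite_subset[OF _ finite_subset_distinct[OF Suc.prems]]) auto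
  have len: "length ` ?X \<subseteq> {1..card S}"
  proof (rule image_subsetI)
    fix xs assume xs: "xs \<in> ?X"
    then have "length xs \<le> card S"
      using card_mono[OF Suc.prems] by (metis (mono_tags) distinct_card mem_Collect_eq)
    then show "length xs \<in> {1..card S}" using xs by (cases xs) auto
  qed
  have "card (ordered_lah_partitions S (Suc t)) = (\<Sum>xs\<in>?X. ordered_lah (card S - length xs) t)"
    using Suc by (simp add: card_ordered_lah_partitions_Suc card_Diff_subset distinct_card)
  also have "\<dots> = (\<Sum>l\<in>{1..card S}. card {xs \<in> ?X. length xs = l} * ordered_lah (card S - l) t)"
    by (simp add: sum.group[OF fin finite_atLeastAtMost len, symmetric])
  also have "\<dots> = (\<Sum>l\<in>{1..card S}. \<Prod>{card S - l + 1..card S} * ordered_lah (card S - l) t)"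
  proof (rule sum.cong[OF refl])
    fix l assume l: "l \<in> {1..card S}"
    then have "{xs \<in> ?X. length xs = l} = {xs. length xs = l \<and> distinct xs \<and> set xs \<subseteq> S}" by auto
    then show "card {xs \<in> ?X. length xs = l} * ordered_lah (card S - l) t =
        \<Prod>{card S - l + 1..card S} * ordered_lah (card S - l) t"
      using card_lists_distinct_length_eq[OF Suc.prems, of l] l by simp
  qed
  also have "\<dots> = ordered_lah (card S) (Suc t)" by (rule sum_ordered_lah_first_block)
  finally show ?case .
qed

lemma fact_mult_lah: "fact t * lah r t = ordered_lah r t"
  using card_ordered_lah_partitions[of "{0..<r}" t] card_ordered_lah_partitions_eq[of "{0..<r}" t]
  by (simp add: lah_eq_card_lah_partitions)

lemma lah_eq_0: "r < t \<Longrightarrow> lah r t = 0"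
  using fact_mult_lah[of t r] by (cases r) (auto simp: ordered_lah_def binomial_eq_0)

section \<open>The admissible count in terms of Stirling, Lah and derangement numbers\<close>

lemma power_eq_sum_Stirling: "x ^ q = (\<Sum>t\<le>q. Stirling q t * ((x choose t) * fact t))"
proof (induction q)
  case 0
  then show ?case by simp
next
  case (Suc q)
  let ?ff = "\<lambda>t. (x choose t) * fact t"
  have ff_Suc: "x * ?ff t = ?ff (Suc t) + t * ?ff t" for t
  proof -
    have "x * ?ff t = (x * (x choose t)) * fact t" by (simp only: mult.assoc)
    also have "x * (x choose t) = Suc t * (x choose Suc t) + t * (x choose t)"
      using Suc_times_binomial_eq[of x t] by (simp add: algebra_simps)
    finally show ?thesis by (simp add: algebra_simps)
  qed
  have "x ^ Suc q = (\<Sum>t\<le>q. Stirling q t * (x * ?ff t))"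
    using Suc by (simp add: sum_distrib_left algebra_simps)
  also have "\<dots> = (\<Sum>t\<le>q. Stirling q t * ?ff (Suc t)) + (\<Sum>t\<le>q. Stirling q t * (t * ?ff t))"
    by (simp only: ff_Suc distrib_left sum.distrib)
  also have "(\<Sum>t\<le>q. Stirling q t * (t * ?ff t)) = (\<Sum>t\<le>q. Stirling q (Suc t) * (Suc t * ?ff (Suc t)))"
    using sum.atMost_Suc_shift[of "\<lambda>t. Stirling q t * (t * ?ff t)" q] by simp
  also have "(\<Sum>t\<le>q. Stirling q t * ?ff (Suc t)) + \<dots> = (\<Sum>t\<le>q. Stirling (Suc q) (Suc t) * ?ff (Suc t))"
    by (simp add: sum.distrib[symmetric] algebra_simps del: fact_Suc)
  also have "\<dots> = (\<Sum>t\<le>Suc q. Stirling (Suc q) t * ?ff t)"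
    using sum.atMost_Suc_shift[of "\<lambda>t. Stirling (Suc q) t * ?ff t" q] by simp
  finally show ?case .
qed

lemma power_eq_sum_Stirling_upto:
  assumes "x \<le> s"
  shows "x ^ q = (\<Sum>t\<le>s. Stirling q t * ((x choose t) * fact t))"
proof -
  have "x ^ q = (\<Sum>t\<le>q + s. Stirling q t * ((x choose t) * fact t))"
    unfolding power_eq_sum_Stirling by (rule sum.mono_neutral_left) auto
  also have "\<dots> = (\<Sum>t\<le>s. Stirling q t * ((x choose t) * fact t))"
    by (rule sum.mono_neutral_right) (use assms in auto)
  finally show ?thesis .
qed

lemma choose_mult_choose_diff_swap:
  assumes "r + i \<le> s"
  shows "(s choose r) * ((s - r) choose i) = (s choose i) * ((s - i) choose r)"
  using choose_mult[of r "r + i" s] choose_mult[of i "r + i" s] binomial_symmetric[of r "r + i"] assms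
  by (simp add: mult.commute)

lemma sum_atMost_diff_swap:
  fixes f :: "nat \<Rightarrow> nat \<Rightarrow> 'a :: comm_monoid_add"
  shows "(\<Sum>r\<le>s. \<Sum>i\<le>s - r. f r i) = (\<Sum>i\<le>s. \<Sum>r\<le>s - i. f r i)"
proof -
  have "(\<Sum>r\<le>s. \<Sum>i\<le>s - r. f r i) = (\<Sum>r\<le>s. \<Sum>i\<in>{i\<in>{..s}. r + i \<le> s}. f r i)"
    by (rule sum.cong[OF refl], rule sum.cong) auto
  also have "\<dots> = (\<Sum>i\<le>s. \<Sum>r\<in>{r\<in>{..s}. r + i \<le> s}. f r i)"
    by (rule sum.swap_restrict) auto
  also have "\<dots> = (\<Sum>i\<le>s. \<Sum>r\<le>s - i. f r i)"
    by (rule sum.cong[OF refl], rule sum.cong) auto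
  finally show ?thesis .
qed

lemma sum_ordered_lah_binomial:
  "(\<Sum>r\<le>u. (u choose r) * fact (u - r) * ordered_lah r t) = fact u * (u choose t)"
proof (cases "t = 0")
  case True
  have "(\<Sum>r\<le>u. (u choose r) * fact (u - r) * ordered_lah r t) = (\<Sum>r\<le>u. if r = 0 then fact u else 0)"
    by (rule sum.cong[OF refl]) (simp add: ordered_lah_def True)
  then show ?thesis using True by simp
next
  case False
  have "(u choose r) * fact (u - r) * ordered_lah r t = (if r = 0 then 0 else fact u * ((r - 1) choose (t - 1)))"
    if "r \<le> u" for r
    using binomial_fact_lemma[OF that] False by (auto simp: ordered_lah_def algebra_simps)
  then have "(\<Sum>r\<le>u. (u choose r) * fact (u - r) * ordered_lah r t) = fact u * (\<Sum>r\<in>{1..u}. (r - 1) choose (t - 1))"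
    unfolding sum_distrib_left by (intro sum.mono_neutral_cong_right) auto
  also have "(\<Sum>r\<in>{1..u}. (r - 1) choose (t - 1)) = (\<Sum>i<u. i choose (t - 1))"
    by (rule sum.reindex_bij_witness[where i = Suc and j = "\<lambda>r. r - 1"]) auto
  also have "\<dots> = u choose t"
    using False by (cases u) (simp_all add: lessThan_Suc_atMost sum_choose_upper)
  finally show ?thesis .
qed

lemma fact_mult_sum_lah_derangements:
  "fact t * (\<Sum>r\<le>s. int (s choose r) * int (lah r t) * int (derangements_num (s - r))) =
    (\<Sum>i\<le>s. (-1)^i * int (s choose i) * fact (s - i) * int ((s - i) choose t))"
proof -
  let ?c = "\<lambda>i r. (-1)^i * int (s choose i) * int ((s - i) choose r) * fact (s - i - r) * int (ordered_lah r t)"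
  have "fact t * (\<Sum>r\<le>s. int (s choose r) * int (lah r t) * int (derangements_num (s - r))) =
      (\<Sum>r\<le>s. int (s choose r) * int (ordered_lah r t) * admissible_count (s - r) 0)"
    unfolding sum_distrib_left
    by (rule sum.cong[OF refl])
      (simp add: derangements_num_eq_admissible_count algebra_simps flip: fact_mult_lah)
  also have "\<dots> = (\<Sum>r\<le>s. \<Sum>i\<le>s - r. ?c i r)"
  proof (rule sum.cong[OF refl])
    fix r assume r: "r \<in> {..s}"
    have "int (s choose r) * int ((s - r) choose i) = int (s choose i) * int ((s - i) choose r)"
      if "i \<le> s - r" for i
      using choose_mult_choose_diff_swap[of r i s] that r by (simp flip: of_nat_mult)
    then show "int (s choose r) * int (ordered_lah r t) * admissible_count (s - r) 0 = (\<Sum>i\<le>s - r. ?c i r)"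
      unfolding admissible_count_def sum_distrib_left
      by (intro sum.cong[OF refl]) (simp add: algebra_simps diff_commute[of s r])
  qed
  also have "\<dots> = (\<Sum>i\<le>s. \<Sum>r\<le>s - i. ?c i r)"
    by (rule sum_atMost_diff_swap)
  also have "\<dots> = (\<Sum>i\<le>s. (-1)^i * int (s choose i) * fact (s - i) * int ((s - i) choose t))"
  proof (rule sum.cong[OF refl])
    fix i
    have "(\<Sum>r\<le>s - i. ?c i r) =
        (-1)^i * int (s choose i) * int (\<Sum>r\<le>s - i. ((s - i) choose r) * fact (s - i - r) * ordered_lah r t)"
      by (simp add: sum_distrib_left algebra_simps)
    also have "\<dots> = (-1)^i * int (s choose i) * int (fact (s - i) * ((s - i) choose t))"
      by (simp only: sum_ordered_lah_binomial)
    finally show "(\<Sum>r\<le>s - i. ?c i r) = (-1)^i * int (s choose i) * fact (s - i) * int ((s - i) choose t)"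
      by simp
  qed
  finally show ?thesis .
qed

lemma admissible_count_eq_sum_Stirling:
  "admissible_count s q = (\<Sum>t=0..s. (fact t)^2 * int (Stirling q t) *
      (\<Sum>r=t..s. int (s choose r) * int (lah r t) * int (derangements_num (s - r))))"
proof -
  let ?G = "\<lambda>t. \<Sum>r\<le>s. int (s choose r) * int (lah r t) * int (derangements_num (s - r))"
  have "admissible_count s q = (\<Sum>i\<le>s. \<Sum>t\<le>s. int (Stirling q t) * fact t *
      ((-1)^i * int (s choose i) * fact (s - i) * int ((s - i) choose t)))"
    unfolding admissible_count_def
  proof (rule sum.cong[OF refl])
    fix i assume "i \<in> {..s}"
    then have "int (s - i) ^ q = (\<Sum>t\<le>s. int (Stirling q t) * fact t * int ((s - i) choose t))"
      using arg_cong[OF power_eq_sum_Stirling_upto[of "s - i" s q], of int]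
      by (simp add: of_nat_sum algebra_simps del: of_nat_diff)
    then show "(-1)^i * int (s choose i) * fact (s - i) * int (s - i) ^ q = (\<Sum>t\<le>s. int (Stirling q t) * fact t *
      ((-1)^i * int (s choose i) * fact (s - i) * int ((s - i) choose t)))"
      by (simp add: sum_distrib_left algebra_simps)
  qed
  also have "\<dots> = (\<Sum>t\<le>s. int (Stirling q t) * fact t *
      (\<Sum>i\<le>s. (-1)^i * int (s choose i) * fact (s - i) * int ((s - i) choose t)))"
    by (subst sum.swap) (simp only: sum_distrib_left)
  also have "\<dots> = (\<Sum>t\<le>s. int (Stirling q t) * fact t * (fact t * ?G t))"
    by (simp only: fact_mult_sum_lah_derangements)
  also have "\<dots> = (\<Sum>t=0..s. (fact t)^2 * int (Stirling q t) *
      (\<Sum>r=t..s. int (s choose r) * int (lah r t) * int (derangements_num (s - r))))"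
  proof (rule sum.cong)
    fix t assume "t \<in> {0..s}"
    have "?G t = (\<Sum>r=t..s. int (s choose r) * int (lah r t) * int (derangements_num (s - r)))"
      by (rule sum.mono_neutral_right) (auto simp: lah_eq_0)
    then show "int (Stirling q t) * fact t * (fact t * ?G t) = (fact t)^2 * int (Stirling q t) *
      (\<Sum>r=t..s. int (s choose r) * int (lah r t) * int (derangements_num (s - r)))"
      by (simp add: power2_eq_square)
  qed auto
  finally show ?thesis .
qed

section \<open>The boarding process\<close>

text \<open>\<open>xs ! j\<close> is the seat of passenger \<open>j + 1\<close>.\<close>
definition valid_seating :: "nat \<Rightarrow> nat \<Rightarrow> nat \<Rightarrow> nat list \<Rightarrow> bool" where
  "valid_seating n k i xs \<longleftrightarrow> length xs = i \<and> distinct xs \<and> set xs \<subseteq> {1..n} \<and>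
     (\<forall>j<i. k \<le> j \<longrightarrow> Suc j \<notin> set (take j xs) \<longrightarrow> xs ! j = Suc j)"

text \<open>Passenger \<open>j + 1\<close> chooses at random exactly when \<open>j < k\<close> or his seat is taken; then \<open>n - j\<close>
  seats are free.\<close>
definition seating_weight :: "nat \<Rightarrow> nat \<Rightarrow> nat \<Rightarrow> nat list \<Rightarrow> real" where
  "seating_weight n k i xs = (\<Prod>j \<in> {j. j < i \<and> (j < k \<or> Suc j \<in> set (take j xs))}. 1 / real (n - j))"

lemma pmf_bind_append_singleton:
  "pmf (M \<bind> (\<lambda>xs. N xs \<bind> (\<lambda>s. return_pmf (xs @ [s])))) ys =
     (if ys = [] then 0 else pmf M (butlast ys) * pmf (N (butlast ys)) (last ys))"
proof -
  have "pmf (N xs \<bind> (\<lambda>s. return_pmf (xs @ [s]))) ys =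
      indicator {butlast ys} xs * (if ys = [] then 0 else pmf (N (butlast ys)) (last ys))" for xs
  proof -
    have "(\<lambda>s. xs @ [s]) -` {ys} = (if ys \<noteq> [] \<and> butlast ys = xs then {last ys} else {})"
      by (auto simp: snoc_eq_iff_butlast)
    then show ?thesis
      by (simp add: map_pmf_def[symmetric] pmf_map measure_pmf_single indicator_def)
  qed
  then show ?thesis by (simp add: pmf_bind measure_pmf_single)
qed

lemma valid_seating_append_singleton:
  "valid_seating n k (Suc i) (xs @ [s]) \<longleftrightarrow> valid_seating n k i xs \<and> s \<in> {1..n} \<and> s \<notin> set xs \<and>
      (k \<le> i \<longrightarrow> Suc i \<notin> set xs \<longrightarrow> s = Suc i)"
  unfolding valid_seating_def by (auto simp: less_Suc_eq nth_append)

lemma seating_weight_append_singleton: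
  assumes "length xs = i"
  shows "seating_weight n k (Suc i) (xs @ [s]) =
    seating_weight n k i xs * (if i < k \<or> Suc i \<in> set xs then 1 / real (n - i) else 1)"
proof -
  have "{j. j < Suc i \<and> (j < k \<or> Suc j \<in> set (take j (xs @ [s])))} =
      {j. j < i \<and> (j < k \<or> Suc j \<in> set (take j xs))} \<union> (if i < k \<or> Suc i \<in> set xs then {i} else {})"
    using assms by (auto simp: less_Suc_eq)
  then show ?thesis unfolding seating_weight_def by (auto simp: prod.union_disjoint)
qed

lemma card_free_seats:
  assumes "valid_seating n k i xs"
  shows "card ({1..n} - set xs) = n - i"
  using assms unfolding valid_seating_def by (simp add: card_Diff_subset distinct_card)

lemma pmf_seating:
  "i \<le> n \<Longrightarrow> pmf (seating n k i) xs = (if valid_seating n k i xs then seating_weight n k i xs else 0)"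
proof (induction i arbitrary: xs)
  case 0
  have "valid_seating n k 0 xs \<longleftrightarrow> xs = []" unfolding valid_seating_def by auto
  then show ?case by (auto simp: seating_weight_def indicator_def)
next
  case (Suc i)
  show ?case
  proof (cases xs rule: rev_cases)
    case Nil
    then show ?thesis by (simp add: pmf_bind_append_singleton valid_seating_def)
  next
    case (snoc ys s)
    have "pmf (seating n k (Suc i)) xs = pmf (seating n k i) ys *
        pmf (if Suc i \<le> k \<or> Suc i \<in> set ys then pmf_of_set ({1..n} - set ys) else return_pmf (Suc i)) s"
      using snoc by (simp add: pmf_bind_append_singleton)
    also have "\<dots> = (if valid_seating n k (Suc i) xs then seating_weight n k (Suc i) xs else 0)"
    proof (cases "valid_seating n k i ys")
      case False
      then show ?thesis using Suc snoc by (simp add: valid_seating_append_singleton)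
    next
      case True
      have "card ({1..n} - set ys) = n - i" "length ys = i"
        using card_free_seats[OF True] True unfolding valid_seating_def by auto
      moreover have "{1..n} - set ys \<noteq> {}"
        using calculation Suc.prems by (metis card.empty zero_less_diff Suc_le_eq less_irrefl)
      ultimately show ?thesis
        using Suc True snoc
        by (auto simp: valid_seating_append_singleton seating_weight_append_singleton pmf_of_set indicator_def)
    qed
    finally show ?thesis .
  qed
qed

lemma finite_valid_seatings: "finite {xs. valid_seating n k i xs}"
  by (rule finite_subset[of _ "{xs. set xs \<subseteq> {1..n} \<and> length xs = i}"])
    (auto simp: valid_seating_def finite_lists_length_eq)

lemma prob_seating_eq_sum_seating_weight:
  "measure_pmf.prob (seating n k n) {xs. P xs} =
     (\<Sum>xs \<in> {xs. valid_seating n k n xs \<and> P xs}. seating_weight n k n xs)"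
proof -
  let ?M = "seating n k n" and ?B = "{xs. valid_seating n k n xs \<and> P xs}"
  have fin: "finite ?B" using finite_valid_seatings by (rule finite_subset[rotated]) auto
  have "set_pmf ?M \<subseteq> {xs. valid_seating n k n xs}"
    using pmf_seating[of n n k] by (auto simp: set_pmf_eq)
  then have "measure_pmf.prob ?M {xs. P xs} = measure_pmf.prob ?M ?B"
    by (intro measure_pmf.finite_measure_eq_AE AE_pmfI) auto
  also have "\<dots> = (\<Sum>xs\<in>?B. pmf ?M xs)" using fin by (rule measure_measure_pmf_finite)
  also have "\<dots> = (\<Sum>xs\<in>?B. seating_weight n k n xs)" by (simp add: pmf_seating)
  finally show ?thesis .
qed

section \<open>Complete seatings as admissible derangements\<close>

declare upt_Suc[simp del]

definition misseated_in :: "nat set \<Rightarrow> nat list \<Rightarrow> nat set" where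
  "misseated_in S xs = {j \<in> S. xs ! (j - 1) \<noteq> j}"

lemma misseated_eq_card_misseated_in:
  assumes "k \<le> n"
  shows "misseated n xs = card (misseated_in {1..k} xs) + card (misseated_in {Suc k..n} xs)"
proof -
  have "misseated_in {1..n} xs = misseated_in {1..k} xs \<union> misseated_in {Suc k..n} xs"
    using assms unfolding misseated_in_def by auto
  then show ?thesis
    unfolding misseated_def by (simp add: card_Un_disjoint misseated_in_def[of _ xs] disjoint_iff)
qed

lemma nth_map_upt: "j \<in> {1..n} \<Longrightarrow> map \<tau> [1..<Suc n] ! (j - 1) = \<tau> j"
  by auto

lemma set_take_map_upt: "j \<le> n \<Longrightarrow> set (take j (map \<tau> [1..<Suc n])) = \<tau> ` {1..j}"
  by (simp add: take_map take_upt atLeastLessThanSuc_atLeastAtMost)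

lemma misseated_in_map_upt:
  "S \<subseteq> {1..n} \<Longrightarrow> misseated_in S (map \<tau> [1..<Suc n]) = {j \<in> S. \<tau> j \<noteq> j}"
  unfolding misseated_in_def by (auto simp: subset_iff nth_map_upt)

definition seating_perm :: "nat \<Rightarrow> nat list \<Rightarrow> nat \<Rightarrow> nat" where
  "seating_perm n xs = (\<lambda>i. if i \<in> {1..n} then xs ! (i - 1) else i)"

lemma map_seating_perm: "length xs = n \<Longrightarrow> map (seating_perm n xs) [1..<Suc n] = xs"
  by (rule nth_equalityI) (auto simp: seating_perm_def)

lemma seating_perm_map:
  assumes "\<tau> permutes S" "S \<subseteq> {1..n}"
  shows "seating_perm n (map \<tau> [1..<Suc n]) = \<tau>"
proof
  fix i
  have "i \<notin> {1..n} \<Longrightarrow> \<tau> i = i" using assms by (auto intro: permutes_not_in)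
  then show "seating_perm n (map \<tau> [1..<Suc n]) i = \<tau> i"
    by (auto simp: seating_perm_def nth_map_upt)
qed

lemma seating_perm_permutes:
  assumes "valid_seating n k n xs"
  shows "seating_perm n xs permutes {1..n}"
proof -
  have len: "length xs = n" and "distinct xs" "set xs \<subseteq> {1..n}"
    using assms unfolding valid_seating_def by auto
  then have "set xs = {1..n}"
    by (metis card_atLeastAtMost card_subset_eq diff_Suc_1 distinct_card finite_atLeastAtMost)
  moreover have "set xs = seating_perm n xs ` {1..n}" and "distinct (map (seating_perm n xs) [1..<Suc n])"
    using map_seating_perm[OF len] \<open>distinct xs\<close> set_map[of "seating_perm n xs" "[1..<Suc n]"]
    by (simp_all add: atLeastLessThanSuc_atLeastAtMost)
  ultimately have "bij_betw (seating_perm n xs) {1..n} {1..n}"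
    by (simp add: bij_betw_def distinct_map atLeastLessThanSuc_atLeastAtMost)
  then show ?thesis by (rule bij_imp_permutes) (auto simp: seating_perm_def)
qed

lemma valid_seating_map_upt_iff:
  assumes \<tau>: "\<tau> permutes {1..n}"
  shows "valid_seating n k n (map \<tau> [1..<Suc n]) \<longleftrightarrow> (\<forall>d\<in>{Suc k..n}. d \<notin> \<tau> ` {1..<d} \<longrightarrow> \<tau> d = d)"
proof -
  have "distinct (map \<tau> [1..<Suc n])" "set (map \<tau> [1..<Suc n]) \<subseteq> {1..n}"
    using permutes_inj_on[OF \<tau>] permutes_in_image[OF \<tau>]
    by (auto simp: distinct_map atLeastLessThanSuc_atLeastAtMost)
  moreover have "map \<tau> [1..<Suc n] ! j = \<tau> (Suc j)" "set (take j (map \<tau> [1..<Suc n])) = \<tau> ` {1..<Suc j}"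
    if "j < n" for j
    using that nth_map_upt[of "Suc j" n \<tau>] set_take_map_upt[of j n \<tau>]
    by (auto simp: atLeastLessThanSuc_atLeastAtMost)
  moreover have "(\<forall>j<n. k \<le> j \<longrightarrow> P (Suc j)) \<longleftrightarrow> (\<forall>d\<in>{Suc k..n}. P d)" for P
  proof
    assume P: "\<forall>j<n. k \<le> j \<longrightarrow> P (Suc j)"
    show "\<forall>d\<in>{Suc k..n}. P d"
    proof
      fix d assume "d \<in> {Suc k..n}"
      then obtain j where "d = Suc j" "j < n" "k \<le> j" by (cases d) auto
      then show "P d" using P by blast
    qed
  qed auto
  ultimately show ?thesis
    unfolding valid_seating_def by simp
qed

lemma admissible_derangements_iff_valid_seating:
  assumes \<tau>: "\<tau> permutes {1..n}" and "k \<le> n"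
  shows "\<tau> \<in> admissible_derangements {j \<in> {1..k}. \<tau> j \<noteq> j} {j \<in> {Suc k..n}. \<tau> j \<noteq> j} \<longleftrightarrow>
    valid_seating n k n (map \<tau> [1..<Suc n])"
proof -
  let ?A = "{j \<in> {1..k}. \<tau> j \<noteq> j}" and ?D = "{j \<in> {Suc k..n}. \<tau> j \<noteq> j}"
  have AD: "?A \<union> ?D = {j \<in> {1..n}. \<tau> j \<noteq> j}" using \<open>k \<le> n\<close> by auto
  have inj: "\<tau> x = \<tau> y \<longleftrightarrow> x = y" for x y using permutes_inj[OF \<tau>] by (auto dest: injD)
  have "\<tau> permutes ?A \<union> ?D" unfolding AD by (rule permutes_superset[OF \<tau>]) auto
  then have "\<tau> \<in> admissible_derangements ?A ?D \<longleftrightarrow> (\<forall>z\<in>?A \<union> ?D. \<tau> z \<in> ?D \<longrightarrow> z < \<tau> z)"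
    unfolding admissible_derangements_def AD by auto
  also have "\<dots> \<longleftrightarrow> (\<forall>d\<in>{Suc k..n}. d \<notin> \<tau> ` {1..<d} \<longrightarrow> \<tau> d = d)"
  proof
    assume ord: "\<forall>z\<in>?A \<union> ?D. \<tau> z \<in> ?D \<longrightarrow> z < \<tau> z"
    show "\<forall>d\<in>{Suc k..n}. d \<notin> \<tau> ` {1..<d} \<longrightarrow> \<tau> d = d"
    proof (intro ballI impI)
      fix d assume d: "d \<in> {Suc k..n}" "d \<notin> \<tau> ` {1..<d}"
      show "\<tau> d = d"
      proof (rule ccontr)
        assume "\<tau> d \<noteq> d"
        have "d \<in> \<tau> ` {1..n}" using d permutes_image[OF \<tau>] by auto
        then obtain z where z: "z \<in> {1..n}" "\<tau> z = d" by blast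
        with \<open>\<tau> d \<noteq> d\<close> have "z \<in> ?A \<union> ?D" unfolding AD by auto
        with ord z d \<open>\<tau> d \<noteq> d\<close> have "z < d" by auto
        with d z show False by auto
      qed
    qed
  next
    assume valid: "\<forall>d\<in>{Suc k..n}. d \<notin> \<tau> ` {1..<d} \<longrightarrow> \<tau> d = d"
    show "\<forall>z\<in>?A \<union> ?D. \<tau> z \<in> ?D \<longrightarrow> z < \<tau> z"
    proof (intro ballI impI)
      fix z assume "z \<in> ?A \<union> ?D" "\<tau> z \<in> ?D"
      with valid have "\<tau> z \<in> \<tau> ` {1..<\<tau> z}" by blast
      then obtain z' where "\<tau> z = \<tau> z'" "z' \<in> {1..<\<tau> z}" by (rule imageE)
      then show "z < \<tau> z" unfolding inj by auto
    qed
  qed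
  also have "\<dots> \<longleftrightarrow> valid_seating n k n (map \<tau> [1..<Suc n])"
    by (rule valid_seating_map_upt_iff[OF \<tau>, symmetric])
  finally show ?thesis .
qed

lemma admissible_derangements_nonfixed:
  assumes "\<tau> \<in> admissible_derangements A D" and "A \<subseteq> {1..k}" "D \<subseteq> {Suc k..n}"
  shows "A = {j \<in> {1..k}. \<tau> j \<noteq> j}" "D = {j \<in> {Suc k..n}. \<tau> j \<noteq> j}"
proof -
  have "\<tau> j \<noteq> j \<longleftrightarrow> j \<in> A \<union> D" for j
    using assms(1) permutes_not_in[of \<tau> "A \<union> D" j] unfolding admissible_derangements_def by blast
  then show "A = {j \<in> {1..k}. \<tau> j \<noteq> j}" "D = {j \<in> {Suc k..n}. \<tau> j \<noteq> j}"
    using assms(2,3) by auto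
qed

lemma bij_betw_admissible_derangements_valid_seatings:
  assumes A: "A \<subseteq> {1..k}" and D: "D \<subseteq> {Suc k..n}" and "k \<le> n"
  shows "bij_betw (\<lambda>\<tau>. map \<tau> [1..<Suc n]) (admissible_derangements A D)
    {xs. valid_seating n k n xs \<and> misseated_in {1..k} xs = A \<and> misseated_in {Suc k..n} xs = D}"
proof -
  let ?V = "{xs. valid_seating n k n xs \<and> misseated_in {1..k} xs = A \<and> misseated_in {Suc k..n} xs = D}"
  have perm: "\<tau> permutes {1..n}" if "\<tau> \<in> admissible_derangements A D" for \<tau>
  proof -
    have "A \<union> D \<subseteq> {1..n}" using A D \<open>k \<le> n\<close> by fastforce
    then show ?thesis using that unfolding admissible_derangements_def by (auto intro: permutes_subset)
  qed
  have f_into: "map \<tau> [1..<Suc n] \<in> ?V" if \<tau>: "\<tau> \<in> admissible_derangements A D" for \<tau>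
  proof (intro CollectI conjI)
    note nonfixed = admissible_derangements_nonfixed[OF \<tau> A D]
    show "valid_seating n k n (map \<tau> [1..<Suc n])"
      using admissible_derangements_iff_valid_seating[OF perm[OF \<tau>] \<open>k \<le> n\<close>] \<tau>
      unfolding nonfixed[symmetric] by blast
    show "misseated_in {1..k} (map \<tau> [1..<Suc n]) = A"
      using \<open>k \<le> n\<close> nonfixed(1) by (subst misseated_in_map_upt) auto
    show "misseated_in {Suc k..n} (map \<tau> [1..<Suc n]) = D"
      using nonfixed(2) by (subst misseated_in_map_upt) auto
  qed
  have g_into: "seating_perm n xs \<in> admissible_derangements A D" if "xs \<in> ?V" for xs
  proof -
    have xs: "valid_seating n k n xs" "misseated_in {1..k} xs = A" "misseated_in {Suc k..n} xs = D"
      using that by auto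
    let ?\<tau> = "seating_perm n xs"
    have \<tau>: "?\<tau> permutes {1..n}" by (rule seating_perm_permutes[OF xs(1)])
    have xs_eq: "xs = map ?\<tau> [1..<Suc n]"
      using map_seating_perm[of xs n] xs(1) unfolding valid_seating_def by auto
    have "A = {j \<in> {1..k}. ?\<tau> j \<noteq> j}" "D = {j \<in> {Suc k..n}. ?\<tau> j \<noteq> j}"
      using misseated_in_map_upt[of "{1..k}" n ?\<tau>] misseated_in_map_upt[of "{Suc k..n}" n ?\<tau>] xs \<open>k \<le> n\<close>
      unfolding xs_eq[symmetric] by auto
    then show ?thesis
      using admissible_derangements_iff_valid_seating[OF \<tau> \<open>k \<le> n\<close>] xs(1) xs_eq by simp
  qed
  show ?thesis
  proof (rule bij_betw_byWitness[where f' = "seating_perm n"])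
    show "\<forall>\<tau>\<in>admissible_derangements A D. seating_perm n (map \<tau> [1..<Suc n]) = \<tau>"
      using perm seating_perm_map[OF _ order_refl] by blast
    show "\<forall>xs\<in>?V. map (seating_perm n xs) [1..<Suc n] = xs"
      using map_seating_perm by (auto simp: valid_seating_def)
  qed (use f_into g_into in auto)
qed

lemma admissible_derangements_taken_before_iff:
  assumes \<tau>: "\<tau> \<in> admissible_derangements A D"
    and A: "A \<subseteq> {1..k}" and D: "D \<subseteq> {Suc k..n}" and d: "d \<in> {Suc k..n}"
  shows "d \<in> \<tau> ` {1..<d} \<longleftrightarrow> d \<in> D"
proof -
  have p: "\<tau> permutes A \<union> D" and ord: "\<forall>z\<in>A \<union> D. \<tau> z \<in> D \<longrightarrow> z < \<tau> z"
    using \<tau> unfolding admissible_derangements_def by auto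
  have nonfixed: "\<tau> x \<noteq> x \<longleftrightarrow> x \<in> A \<union> D" for x
    using \<tau> permutes_not_in[OF p, of x] unfolding admissible_derangements_def by blast
  show ?thesis
  proof
    assume "d \<in> \<tau> ` {1..<d}"
    then obtain z where "d = \<tau> z" "z < d" by auto
    then have "\<tau> d \<noteq> d" using permutes_inj[OF p] by (metis injD less_irrefl)
    then show "d \<in> D" using nonfixed A d by auto
  next
    assume "d \<in> D"
    then have "d \<in> \<tau> ` (A \<union> D)" using permutes_image[OF p] by auto
    then obtain z where z: "z \<in> A \<union> D" "\<tau> z = d" by auto
    then have "z \<in> {1..<d}" using ord \<open>d \<in> D\<close> A D by force
    then show "d \<in> \<tau> ` {1..<d}" using z by auto
  qed
qed

lemma prod_inverse_eq_prod_complement_div_fact: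
  assumes "J \<subseteq> {..<n}"
  shows "(\<Prod>j\<in>J. 1 / real (n - j)) = (\<Prod>j\<in>{..<n} - J. real (n - j)) / fact n"
proof -
  have "fact n = (\<Prod>j<n. real (n - j))"
    by (simp add: fact_prod_rev atLeast0LessThan)
  also have "\<dots> = (\<Prod>j\<in>{..<n} - J. real (n - j)) * (\<Prod>j\<in>J. real (n - j))"
    by (rule prod.subset_diff[OF assms finite_lessThan])
  finally show ?thesis
    using assms by (auto simp: prod_dividef field_simps intro!: prod_pos)
qed

lemma seating_weight_map_upt:
  assumes \<tau>: "\<tau> \<in> admissible_derangements A D"
    and A: "A \<subseteq> {1..k}" and D: "D \<subseteq> {Suc k..n}" and "k \<le> n"
  shows "seating_weight n k n (map \<tau> [1..<Suc n]) = (\<Prod>d\<in>{Suc k..n} - D. real (n + 1 - d)) / fact n"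
proof -
  let ?xs = "map \<tau> [1..<Suc n]" and ?pred = "\<lambda>d. d - 1"
  have taken: "Suc j \<in> set (take j ?xs) \<longleftrightarrow> Suc j \<in> D" if "k \<le> j" "j < n" for j
    using admissible_derangements_taken_before_iff[OF \<tau> A D, of "Suc j"] set_take_map_upt[of j n \<tau>] that
    by (simp add: atLeastLessThanSuc_atLeastAtMost)
  have pred: "j \<in> ?pred ` ({Suc k..n} - D) \<longleftrightarrow> Suc j \<in> {Suc k..n} - D" for j
  proof
    assume "j \<in> ?pred ` ({Suc k..n} - D)"
    then obtain d where "d \<in> {Suc k..n} - D" "j = d - 1" by blast
    then show "Suc j \<in> {Suc k..n} - D" by (cases d) auto
  qed (rule rev_image_eqI[of "Suc j"], auto)
  have random: "{j. j < n \<and> (j < k \<or> Suc j \<in> set (take j ?xs))} = {..<n} - ?pred ` ({Suc k..n} - D)"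
  proof (rule set_eqI)
    fix j
    show "j \<in> {j. j < n \<and> (j < k \<or> Suc j \<in> set (take j ?xs))} \<longleftrightarrow> j \<in> {..<n} - ?pred ` ({Suc k..n} - D)"
      using taken[of j] pred[of j] by (cases "j < k") auto
  qed
  have "seating_weight n k n ?xs = (\<Prod>j\<in>{..<n} - ({..<n} - ?pred ` ({Suc k..n} - D)). real (n - j)) / fact n"
    unfolding seating_weight_def random by (rule prod_inverse_eq_prod_complement_div_fact) auto
  also have "{..<n} - ({..<n} - ?pred ` ({Suc k..n} - D)) = ?pred ` ({Suc k..n} - D)"
    by auto
  also have "(\<Prod>j\<in>?pred ` ({Suc k..n} - D). real (n - j)) = (\<Prod>d\<in>{Suc k..n} - D. real (n + 1 - d))"
    by (subst prod.reindex) (auto simp: inj_on_def Suc_diff_le)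
  finally show ?thesis .
qed

lemma sum_subsets_prod_complement_insert:
  fixes w :: "'a \<Rightarrow> 'b :: comm_semiring_1"
  assumes K: "finite K" and a: "a \<notin> K"
  shows "(\<Sum>D | D \<subseteq> insert a K \<and> card D = Suc q. \<Prod>j\<in>insert a K - D. w j) =
    w a * (\<Sum>D | D \<subseteq> K \<and> card D = Suc q. \<Prod>j\<in>K - D. w j) + (\<Sum>D | D \<subseteq> K \<and> card D = q. \<Prod>j\<in>K - D. w j)"
proof -
  let ?S = "\<lambda>q. {D. D \<subseteq> K \<and> card D = q}"
  have fin: "finite (?S q)" for q using K by simp
  have split: "{D. D \<subseteq> insert a K \<and> card D = Suc q} = ?S (Suc q) \<union> insert a ` ?S q"
  proof (intro set_eqI iffI)
    fix D assume D: "D \<in> {D. D \<subseteq> insert a K \<and> card D = Suc q}"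
    show "D \<in> ?S (Suc q) \<union> insert a ` ?S q"
    proof (cases "a \<in> D")
      case True
      then have "D - {a} \<in> ?S q" "D = insert a (D - {a})"
        using D K by (auto simp: card_Diff_singleton_if finite_subset)
      then show ?thesis by blast
    next
      case False
      then show ?thesis using D by auto
    qed
  qed (use K a in \<open>auto simp: card_insert_if finite_subset\<close>)
  have disj: "?S (Suc q) \<inter> insert a ` ?S q = {}" using a by auto
  have inj: "inj_on (insert a) (?S q)" using a by (auto simp: inj_on_def)
  have "(\<Sum>D\<in>?S (Suc q). \<Prod>j\<in>insert a K - D. w j) = w a * (\<Sum>D\<in>?S (Suc q). \<Prod>j\<in>K - D. w j)"
    unfolding sum_distrib_left
    by (rule sum.cong[OF refl]) (use K a in \<open>auto simp: insert_Diff_if\<close>)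
  moreover have "(\<Sum>D\<in>insert a ` ?S q. \<Prod>j\<in>insert a K - D. w j) = (\<Sum>D\<in>?S q. \<Prod>j\<in>K - D. w j)"
    by (subst sum.reindex[OF inj]) (use a in \<open>auto intro!: sum.cong prod.cong\<close>)
  ultimately show ?thesis
    unfolding split by (simp add: sum.union_disjoint[OF fin finite_imageI[OF fin] disj])
qed

lemma sum_subsets_prod_complement_eq_stirling:
  "(\<Sum>D | D \<subseteq> {Suc k..n} \<and> card D = q. \<Prod>j\<in>{Suc k..n} - D. n + 1 - j) = stirling (n - k + 1) (q + 1)"
proof (induction "n - k" arbitrary: k q)
  case 0
  then have "{D. D \<subseteq> {Suc k..n} \<and> card D = q} = (if q = 0 then {{}} else {})" by auto
  then show ?case using 0 by simp
next
  case (Suc N)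
  then have K: "{Suc k..n} = insert (Suc k) {Suc (Suc k)..n}" by auto
  have IH: "(\<Sum>D | D \<subseteq> {Suc (Suc k)..n} \<and> card D = q. \<Prod>j\<in>{Suc (Suc k)..n} - D. n + 1 - j) =
      stirling (n - k) (q + 1)" for q
  proof -
    have "N = n - Suc k" "n - Suc k + 1 = n - k" using Suc.hyps(2) by simp_all
    then show ?thesis using Suc.hyps(1)[of "Suc k" q] by (simp del: stirling.simps)
  qed
  show ?case
  proof (cases q)
    case 0
    have "(\<Prod>j\<in>{Suc k..n}. n + 1 - j) = \<Prod>{1..n - k}"
      by (rule prod.reindex_bij_witness[where i = "\<lambda>x. n + 1 - x" and j = "\<lambda>x. n + 1 - x"]) auto
    moreover have "{D. D \<subseteq> {Suc k..n} \<and> card D = 0} = {{}}"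
      by (auto dest: finite_subset[OF _ finite_atLeastAtMost])
    ultimately show ?thesis using 0 by (simp add: fact_prod stirling_Suc_n_1 del: stirling.simps)
  next
    case (Suc q')
    have "Suc k \<notin> {Suc (Suc k)..n}" by simp
    from sum_subsets_prod_complement_insert[OF finite_atLeastAtMost this, where w = "\<lambda>j. n + 1 - j" and q = q']
    show ?thesis
      unfolding K Suc using Suc.hyps(2) IH[of q'] IH[of "Suc q'"] by simp
  qed
qed

lemma sum_Pow_card:
  fixes f :: "nat \<Rightarrow> 'a :: comm_semiring_1"
  assumes X: "finite X"
  shows "(\<Sum>A\<in>Pow X. f (card A)) = (\<Sum>s\<le>card X. of_nat (card X choose s) * f s)"
proof -
  have "card ` Pow X \<subseteq> {..card X}" using X by (auto intro: card_mono)
  then have "(\<Sum>A\<in>Pow X. f (card A)) = (\<Sum>s\<le>card X. \<Sum>A | A \<subseteq> X \<and> card A = s. f (card A))"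
    using sum.group[OF finite_Pow_iff[THEN iffD2, OF X] finite_atMost[of "card X"], where g = card and h = "\<lambda>A. f (card A)"]
    by (simp add: Pow_def conj_commute)
  also have "\<dots> = (\<Sum>s\<le>card X. of_nat (card X choose s) * f s)"
    using n_subsets[OF X] by simp
  finally show ?thesis .
qed

lemma prob_misseated_eq_sum_admissible_derangements:
  assumes "k \<le> n"
  shows "measure_pmf.prob (seating n k n) {xs. misseated n xs = m} =
    (\<Sum>A\<in>Pow {1..k}. \<Sum>D | D \<subseteq> {Suc k..n} \<and> card A + card D = m.
       real (card (admissible_derangements A D)) * ((\<Prod>j\<in>{Suc k..n} - D. real (n + 1 - j)) / fact n))"
proof -
  let ?B = "{xs. valid_seating n k n xs \<and> misseated n xs = m}"
  let ?T = "SIGMA A:Pow {1..k}. {D. D \<subseteq> {Suc k..n} \<and> card A + card D = m}"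
  let ?h = "\<lambda>xs. (misseated_in {1..k} xs, misseated_in {Suc k..n} xs)"
  let ?W = "\<lambda>D. (\<Prod>j\<in>{Suc k..n} - D. real (n + 1 - j)) / fact n"
  have finB: "finite ?B" using finite_valid_seatings by (rule finite_subset[rotated]) auto
  have finT: "finite ?T" by (auto intro: finite_subset[of _ "Pow {Suc k..n}"])
  have "?h ` ?B \<subseteq> ?T"
    using misseated_eq_card_misseated_in[OF assms] by (auto simp: misseated_in_def)
  from sum.group[OF finB finT this, of "seating_weight n k n"]
  have "measure_pmf.prob (seating n k n) {xs. misseated n xs = m} =
      (\<Sum>p\<in>?T. \<Sum>xs | xs \<in> ?B \<and> ?h xs = p. seating_weight n k n xs)"
    by (simp only: prob_seating_eq_sum_seating_weight)
  also have "\<dots> = (\<Sum>(A, D)\<in>?T. real (card (admissible_derangements A D)) * ?W D)"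
  proof (rule sum.cong[OF refl])
    fix p assume "p \<in> ?T"
    then obtain A D where p: "p = (A, D)" and A: "A \<subseteq> {1..k}" and D: "D \<subseteq> {Suc k..n}"
      and m: "card A + card D = m" by auto
    have fiber: "{xs. xs \<in> ?B \<and> ?h xs = (A, D)} =
        {xs. valid_seating n k n xs \<and> misseated_in {1..k} xs = A \<and> misseated_in {Suc k..n} xs = D}"
      using misseated_eq_card_misseated_in[OF assms] m by auto
    have "(\<Sum>xs | xs \<in> ?B \<and> ?h xs = (A, D). seating_weight n k n xs) =
        (\<Sum>\<tau>\<in>admissible_derangements A D. seating_weight n k n (map \<tau> [1..<Suc n]))"
      unfolding fiber
      by (rule sum.reindex_bij_betw[OF bij_betw_admissible_derangements_valid_seatings[OF A D assms], symmetric])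
    also have "\<dots> = real (card (admissible_derangements A D)) * ?W D"
      using seating_weight_map_upt[OF _ A D assms] by simp
    finally show "(\<Sum>xs | xs \<in> ?B \<and> ?h xs = p. seating_weight n k n xs) =
        (case p of (A, D) \<Rightarrow> real (card (admissible_derangements A D)) * ?W D)"
      unfolding p by simp
  qed
  also have "\<dots> = (\<Sum>A\<in>Pow {1..k}. \<Sum>D | D \<subseteq> {Suc k..n} \<and> card A + card D = m.
      real (card (admissible_derangements A D)) * ?W D)"
    by (rule sum.Sigma[symmetric]) (auto intro: finite_subset[of _ "Pow {Suc k..n}"])
  finally show ?thesis .
qed

lemma sum_admissible_derangements_weights_eq_stirling:
  assumes A: "A \<subseteq> {1..k}"
  shows "(\<Sum>D | D \<subseteq> {Suc k..n} \<and> card A + card D = m.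
      real (card (admissible_derangements A D)) * ((\<Prod>j\<in>{Suc k..n} - D. real (n + 1 - j)) / fact n)) =
    (if card A \<le> m
     then of_int (admissible_count (card A) (m - card A)) * real (stirling (n - k + 1) (m - card A + 1))
     else 0) / fact n"
proof (cases "card A \<le> m")
  case True
  have "real (card (admissible_derangements A D)) = of_int (admissible_count (card A) (card D))"
    if "D \<subseteq> {Suc k..n}" for D
  proof -
    have "\<forall>a\<in>A. a \<le> k" "\<forall>x\<in>D. k < x" using A that by auto
    then have "A \<inter> D = {}" "\<forall>a\<in>A. \<forall>x\<in>D. a < x" by fastforce+
    moreover have "finite A" "finite D" using A that by (auto intro: finite_subset)
    ultimately show ?thesis using card_admissible_derangements by (metis of_int_of_nat_eq)
  qed
  then have "(\<Sum>D | D \<subseteq> {Suc k..n} \<and> card A + card D = m.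
      real (card (admissible_derangements A D)) * ((\<Prod>j\<in>{Suc k..n} - D. real (n + 1 - j)) / fact n)) =
      of_int (admissible_count (card A) (m - card A)) / fact n *
      real (\<Sum>D | D \<subseteq> {Suc k..n} \<and> card D = m - card A. \<Prod>j\<in>{Suc k..n} - D. n + 1 - j)"
    using True by (auto simp: sum_distrib_left intro!: sum.cong)
  also have "(\<Sum>D | D \<subseteq> {Suc k..n} \<and> card D = m - card A. \<Prod>j\<in>{Suc k..n} - D. n + 1 - j) =
      stirling (n - k + 1) (m - card A + 1)"
    by (rule sum_subsets_prod_complement_eq_stirling)
  finally show ?thesis using True by (simp del: stirling.simps)
qed simp

lemma stirling_int_of_nat:
  "stirling1_int (int a) (int b) = stirling a b" "stirling2_int (int a) (int b) = Stirling a b"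
  by (simp_all add: stirling1_int_def stirling2_int_def)

lemma sum_Stirling_lah_derangements_eq_admissible_count:
  assumes "k \<le> n"
  shows "(\<Sum>t=0..s. (fact t)^2 * real (stirling2_int (int m - int s) (int t))
          * real (stirling1_int (int n - int k + 1) (int m - int s + 1))
          * (\<Sum>r=t..s. real (s choose r) * real (lah r t) * real (derangements_num (s - r)))) =
     (if s \<le> m then of_int (admissible_count s (m - s)) * real (stirling (n - k + 1) (m - s + 1)) else 0)"
proof (cases "s \<le> m")
  case True
  let ?G = "\<lambda>t. \<Sum>r=t..s. real (s choose r) * real (lah r t) * real (derangements_num (s - r))"
  have casts: "int m - int s = int (m - s)" "int n - int k = int (n - k)" "int a + 1 = int (a + 1)" for a
    using True assms by simp_all
  have "(\<Sum>t=0..s. (fact t)^2 * real (stirling2_int (int m - int s) (int t))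
          * real (stirling1_int (int n - int k + 1) (int m - int s + 1)) * ?G t) =
      (\<Sum>t=0..s. (fact t)^2 * real (Stirling (m - s) t) * ?G t) * real (stirling (n - k + 1) (m - s + 1))"
    unfolding casts stirling_int_of_nat sum_distrib_right by (rule sum.cong[OF refl]) (simp only: ac_simps)
  also have "(\<Sum>t=0..s. (fact t)^2 * real (Stirling (m - s) t) * ?G t) = of_int (admissible_count s (m - s))"
    unfolding admissible_count_eq_sum_Stirling
    by (simp only: of_int_sum of_int_mult of_int_power of_int_fact of_int_of_nat_eq)
  finally show ?thesis using True by simp
next
  case False
  then show ?thesis by (simp add: stirling2_int_def)
qed

theorem theorem2:
  fixes n k m :: nat
  assumes "0 < k" and "k \<le> n"
  shows "measure_pmf.prob (seating n k n) {xs. misseated n xs = m} =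
    (1 / fact n) * (\<Sum>s=0..k. real (k choose s) *
       (\<Sum>t=0..s. (fact t)^2 * real (stirling2_int (int m - int s) (int t))
          * real (stirling1_int (int n - int k + 1) (int m - int s + 1))
          * (\<Sum>r=t..s. real (s choose r) * real (lah r t) * real (derangements_num (s - r)))))"
proof -
  let ?f = "\<lambda>s. if s \<le> m then of_int (admissible_count s (m - s)) * real (stirling (n - k + 1) (m - s + 1)) else 0"
  have "measure_pmf.prob (seating n k n) {xs. misseated n xs = m} = (\<Sum>A\<in>Pow {1..k}. ?f (card A) / fact n)"
    unfolding prob_misseated_eq_sum_admissible_derangements[OF \<open>k \<le> n\<close>]
    by (rule sum.cong[OF refl]) (rule sum_admissible_derangements_weights_eq_stirling, simp)
  also have "\<dots> = (\<Sum>s\<le>k. real (k choose s) * (?f s / fact n))"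
    using sum_Pow_card[of "{1..k}" "\<lambda>s. ?f s / fact n"] by simp
  also have "\<dots> = (1 / fact n) * (\<Sum>s=0..k. real (k choose s) * ?f s)"
    by (simp add: sum_distrib_left atLeast0AtMost)
  finally show ?thesis
    by (simp only: sum_Stirling_lah_derangements_eq_admissible_count[OF \<open>k \<le> n\<close>])
qed

end
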